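(* Let $m\ge2$ be an integer. There is a bijection $[\mathcal{A}_m]_m\to\mathcal{A}_m^m$, $\pi\mapsto(\lambda^{(1)},\ldots,\lambda^{(m)})$, such that $|\pi|=m\cdot(|\lambda^{(1)}|+\cdots+|\lambda^{(m)}|)$ and $\ell(\pi)=\ell(\lambda^{(1)})+\cdots+\ell(\lambda^{(m)})$. As a consequence, the numbers $a_m(n)$ defined by $\sum_{n\ge0}a_m(n)q^n=\prod_{k\ge0}(1+q^{m^k})^{m^k}$ form an $m$-convolutive sequence.
   Context: A colored $m$-ary strict partition is a finite set of parts, each part being a pair written $m^k_{c}$ with $k\ge0$ an integer and color $c\in\{1,\ldots,m^k\}$ (so no two parts share both the same size and the same color); the part $m^k_c$ has size $m^k$. The weight $|\pi|$ is the sum of the sizes of its parts and $\ell(\pi)$ is its number of parts. $\mathcal{A}_m$ denotes the set of colored $m$-ary strict partitions (including the empty one), and $[\mathcal{A}_m]_m$ the subset of those whose weight is divisible by $m$. A sequence $(a_n)_{n\ge0}$ is $m$-convolutive if $\sum_{n\ge0}a_{mn}q^n=\big(\sum_{n\ge0}a_nq^n\big)^m$. *)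

theory Defs
  imports "HOL-Computational_Algebra.Formal_Power_Series"
begin

text \<open>A part m^k_c is represented by the pair (k, c) with 1 \<le> c \<le> m^k.
  A colored m-ary strict partition is a finite set of such parts.\<close>

definition colored_parts :: "nat \<Rightarrow> (nat \<times> nat) set" where
  "colored_parts m = {(k, c). 1 \<le> c \<and> c \<le> m ^ k}"

definition A :: "nat \<Rightarrow> (nat \<times> nat) set set" where
  "A m = {\<pi>. finite \<pi> \<and> \<pi> \<subseteq> colored_parts m}"

definition weight :: "nat \<Rightarrow> (nat \<times> nat) set \<Rightarrow> nat" where
  "weight m \<pi> = (\<Sum>p\<in>\<pi>. m ^ fst p)"

definition len :: "(nat \<times> nat) set \<Rightarrow> nat" where
  "len \<pi> = card \<pi>"

definition A_div :: "nat \<Rightarrow> (nat \<times> nat) set set" where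
  "A_div m = {\<pi> \<in> A m. m dvd weight m \<pi>}"

definition A_tuples :: "nat \<Rightarrow> (nat \<times> nat) set list set" where
  "A_tuples m = {ls. length ls = m \<and> set ls \<subseteq> A m}"

text \<open>Coefficients of the infinite product prod_{k>=0} (1+q^{m^k})^{m^k}.
  For m \<ge> 2 the factors with k > n are 1 + O(q^{n+1}), so the n-th coefficient
  of the infinite product equals that of the finite product over k \<le> n.\<close>
definition a :: "nat \<Rightarrow> nat \<Rightarrow> nat" where
  "a m n = fps_nth (\<Prod>k\<le>n. (1 + fps_X ^ (m ^ k)) ^ (m ^ k) :: nat fps) n"

definition m_convolutive :: "nat \<Rightarrow> (nat \<Rightarrow> nat) \<Rightarrow> bool" where
  "m_convolutive m s \<longleftrightarrow> Abs_fps (\<lambda>n. s (m * n)) = (Abs_fps s) ^ m"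

end

theory Submission
  imports Defs
begin

text \<open>The \<open>i\<close>-th component (\<open>0 \<le> i < m\<close>) of an \<open>m\<close>-tuple of partitions is merged into a
  single partition by sending each of its parts m^k_c to the part m^(k+1)_(c + i m^k). The colours
  \<open>c + i m\<^sup>k\<close> with \<open>1 \<le> c \<le> m\<^sup>k\<close> and \<open>0 \<le> i < m\<close> enumerate the colours of size m^(k+1) exactly once,
  so merging is a bijection onto the partitions without a part of size 1. For \<open>m \<ge> 2\<close> these are
  exactly the partitions of weight divisible by \<open>m\<close>, because the only part of size 1 is 1_1 and
  all other parts have size divisible by \<open>m\<close>.

  For the convolution identity, the partial products P_N(q) of the product defining \<open>a\<^sub>m\<close>, taken
  over \<open>k \<le> N\<close>, satisfy P_(N+1)(q) = (1 + q) P_N(q^m)^m, and the coefficient of q^n in P_N equals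
  a_m(n) once \<open>N \<ge> n\<close>. The factor \<open>1 + q\<close> does not disturb the coefficients of q^(mn), so
  a_m(mn) is the coefficient of q^n in P_N(q)^m, hence in (\<Sum> a_m(k) q^k)^m.\<close>

definition lift_part :: "nat \<Rightarrow> nat \<Rightarrow> nat \<times> nat \<Rightarrow> nat \<times> nat" where
  "lift_part m i p = (Suc (fst p), snd p + i * m ^ fst p)"

definition merge_tuple :: "nat \<Rightarrow> (nat \<times> nat) set list \<Rightarrow> (nat \<times> nat) set" where
  "merge_tuple m ls = (\<Union>i<m. lift_part m i ` (ls ! i))"

lemma add_mult_eq_add_mult_bounded:
  fixes c d i j M :: nat
  assumes "0 < c" "c \<le> M" "0 < d" "d \<le> M" "c + i * M = d + j * M"
  shows "i = j \<and> c = d"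
proof -
  have "0 < M" "c - 1 < M" "d - 1 < M"
    using assms by simp_all
  then have "(c - 1 + i * M) div M = i" "(d - 1 + j * M) div M = j"
    by simp_all
  moreover have "c - 1 + i * M = d - 1 + j * M"
    using assms by linarith
  ultimately show ?thesis
    using assms by auto
qed

lemma inj_lift_part: "inj (lift_part m i)"
  by (auto simp: inj_def lift_part_def prod_eq_iff)

lemma lift_part_colored:
  assumes "p \<in> colored_parts m" "i < m"
  shows "lift_part m i p \<in> colored_parts m"
proof -
  have "snd p + i * m ^ fst p \<le> Suc i * m ^ fst p"
    using assms(1) by (simp add: colored_parts_def case_prod_beta)
  also have "\<dots> \<le> m * m ^ fst p"
    using assms(2) by (intro mult_le_mono1) simp
  finally show ?thesis
    using assms(1) by (simp add: colored_parts_def lift_part_def case_prod_beta)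
qed

lemma lift_part_eq_iff:
  assumes "0 < m" "p \<in> colored_parts m" "q \<in> colored_parts m"
  shows "lift_part m i p = lift_part m j q \<longleftrightarrow> i = j \<and> p = q"
proof
  assume eq: "lift_part m i p = lift_part m j q"
  then have "fst p = fst q"
    by (simp add: lift_part_def)
  with eq assms show "i = j \<and> p = q"
    using add_mult_eq_add_mult_bounded[of "snd p" "m ^ fst p" "snd q" i j]
    by (auto simp: lift_part_def colored_parts_def case_prod_beta prod_eq_iff)
qed simp

lemma lift_part_surj:
  assumes "0 < m" "q \<in> colored_parts m" "0 < fst q"
  shows "\<exists>i<m. \<exists>p\<in>colored_parts m. lift_part m i p = q"
proof -
  obtain k C where q: "q = (Suc k, C)"
    using assms(3) by (metis gr0_conv_Suc prod.collapse)
  define M where "M = m ^ k"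
  have "0 < M" "0 < C" "C - 1 < m * M"
    using assms q by (auto simp: M_def colored_parts_def)
  then have "(C - 1) div M < m"
    by (simp add: div_less_iff_less_mult)
  moreover have "(k, (C - 1) mod M + 1) \<in> colored_parts m"
    using \<open>0 < M\<close> by (simp add: colored_parts_def M_def Suc_le_eq)
  moreover have "(C - 1) mod M + 1 + (C - 1) div M * M = C"
    using \<open>0 < C\<close> by (simp add: mod_div_mult_eq)
  then have "lift_part m ((C - 1) div M) (k, (C - 1) mod M + 1) = q"
    by (simp add: lift_part_def M_def q)
  ultimately show ?thesis
    by blast
qed

lemma dvd_weight_if_no_unit_part:
  assumes "\<forall>p\<in>\<pi>. 0 < fst p"
  shows "m dvd weight m \<pi>"
  unfolding weight_def using assms by (auto intro!: dvd_sum simp: dvd_power)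

lemma A_div_no_unit_part:
  assumes "2 \<le> m" "\<pi> \<in> A_div m" "p \<in> \<pi>"
  shows "0 < fst p"
proof (rule ccontr)
  assume "\<not> 0 < fst p"
  have colored: "\<pi> \<subseteq> colored_parts m" and "finite \<pi>"
    using assms(2) by (auto simp: A_div_def A_def)
  have unit_part: "q = (0, 1)" if "q \<in> \<pi>" "fst q = 0" for q
    using colored that by (cases q) (auto simp: colored_parts_def)
  then have p: "p = (0, 1)"
    using assms(3) \<open>\<not> 0 < fst p\<close> by simp
  with unit_part have rest: "\<forall>q\<in>\<pi> - {p}. 0 < fst q"
    by (metis DiffE gr0I singletonI)
  have "weight m \<pi> = 1 + weight m (\<pi> - {p})"
    unfolding weight_def using sum.remove[OF \<open>finite \<pi>\<close> assms(3), of "\<lambda>p. m ^ fst p"] p by simp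
  moreover have "m dvd weight m \<pi>"
    using assms(2) by (simp add: A_div_def)
  ultimately have "m dvd 1"
    using dvd_weight_if_no_unit_part[OF rest, of m] by (metis dvd_add_left_iff)
  with assms(1) show False
    by simp
qed

lemma A_tuples_nth:
  assumes "ls \<in> A_tuples m" "i < m"
  shows "finite (ls ! i)" "ls ! i \<subseteq> colored_parts m"
proof -
  have "ls ! i \<in> set ls"
    using assms by (simp add: A_tuples_def)
  then show "finite (ls ! i)" "ls ! i \<subseteq> colored_parts m"
    using assms(1) by (auto simp: A_tuples_def A_def)
qed

lemma lift_part_mem_merge_tuple:
  assumes "0 < m" "ls \<in> A_tuples m" "i < m" "p \<in> colored_parts m"
  shows "lift_part m i p \<in> merge_tuple m ls \<longleftrightarrow> p \<in> ls ! i"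
proof
  assume "lift_part m i p \<in> merge_tuple m ls"
  then obtain j q where "j < m" "q \<in> ls ! j" and eq: "lift_part m i p = lift_part m j q"
    by (auto simp: merge_tuple_def)
  moreover have "q \<in> colored_parts m"
    using A_tuples_nth(2)[OF assms(2) \<open>j < m\<close>] \<open>q \<in> ls ! j\<close> by blast
  ultimately show "p \<in> ls ! i"
    using lift_part_eq_iff[OF assms(1,4)] by simp
next
  assume "p \<in> ls ! i"
  then show "lift_part m i p \<in> merge_tuple m ls"
    using assms(3) by (auto simp: merge_tuple_def)
qed

lemma nth_eq_lift_part_preimage:
  assumes "0 < m" "ls \<in> A_tuples m" "i < m"
  shows "ls ! i = {p \<in> colored_parts m. lift_part m i p \<in> merge_tuple m ls}"
  using lift_part_mem_merge_tuple[OF assms] A_tuples_nth(2)[OF assms(2,3)] by blast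

lemma merge_tuple_in_A_div:
  assumes "ls \<in> A_tuples m"
  shows "merge_tuple m ls \<in> A_div m"
proof -
  have "finite (merge_tuple m ls)" "merge_tuple m ls \<subseteq> colored_parts m"
    unfolding merge_tuple_def using A_tuples_nth[OF assms]
    by (simp, blast intro: lift_part_colored)
  moreover have "\<forall>p\<in>merge_tuple m ls. 0 < fst p"
    by (auto simp: merge_tuple_def lift_part_def)
  ultimately show ?thesis
    using dvd_weight_if_no_unit_part by (auto simp: A_div_def A_def)
qed

lemma inj_on_merge_tuple:
  assumes "0 < m"
  shows "inj_on (merge_tuple m) (A_tuples m)"
proof (rule inj_onI)
  fix ls ls' assume ls: "ls \<in> A_tuples m" and ls': "ls' \<in> A_tuples m"
    and eq: "merge_tuple m ls = merge_tuple m ls'"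
  show "ls = ls'"
  proof (rule nth_equalityI)
    show "length ls = length ls'"
      using ls ls' by (simp add: A_tuples_def)
    fix i assume "i < length ls"
    then have "i < m"
      using ls by (simp add: A_tuples_def)
    then show "ls ! i = ls' ! i"
      using nth_eq_lift_part_preimage[OF assms ls] nth_eq_lift_part_preimage[OF assms ls'] eq
      by simp
  qed
qed

lemma A_div_subset_merge_tuple_image:
  assumes "2 \<le> m"
  shows "A_div m \<subseteq> merge_tuple m ` A_tuples m"
proof
  fix \<pi> assume \<pi>: "\<pi> \<in> A_div m"
  define ls where "ls = map (\<lambda>i. {p \<in> colored_parts m. lift_part m i p \<in> \<pi>}) [0..<m]"
  have "finite \<pi>" "\<pi> \<subseteq> colored_parts m"
    using \<pi> by (auto simp: A_div_def A_def)
  have "finite {p. lift_part m i p \<in> \<pi>}" for i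
    using finite_vimageI[OF \<open>finite \<pi>\<close> inj_lift_part] by (simp add: vimage_def)
  then have "ls \<in> A_tuples m"
    by (auto simp: ls_def A_tuples_def A_def)
  moreover have "\<pi> \<subseteq> merge_tuple m ls"
  proof
    fix q assume "q \<in> \<pi>"
    have "0 < m"
      using assms by simp
    moreover have "q \<in> colored_parts m"
      using \<open>q \<in> \<pi>\<close> \<open>\<pi> \<subseteq> colored_parts m\<close> by blast
    moreover have "0 < fst q"
      using A_div_no_unit_part[OF assms \<pi> \<open>q \<in> \<pi>\<close>] .
    ultimately obtain i p where "i < m" "p \<in> colored_parts m" "lift_part m i p = q"
      using lift_part_surj by blast
    then have "p \<in> ls ! i"
      using \<open>q \<in> \<pi>\<close> by (simp add: ls_def)
    then show "q \<in> merge_tuple m ls"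
      unfolding merge_tuple_def using \<open>i < m\<close> \<open>lift_part m i p = q\<close> by blast
  qed
  moreover have "merge_tuple m ls \<subseteq> \<pi>"
    by (auto simp: merge_tuple_def ls_def)
  ultimately show "\<pi> \<in> merge_tuple m ` A_tuples m"
    by blast
qed

lemma bij_betw_merge_tuple:
  assumes "2 \<le> m"
  shows "bij_betw (merge_tuple m) (A_tuples m) (A_div m)"
  unfolding bij_betw_def
  using assms inj_on_merge_tuple merge_tuple_in_A_div A_div_subset_merge_tuple_image by force

lemma merge_tuple_disjoint:
  assumes "0 < m" "ls \<in> A_tuples m" "i < m" "j < m" "i \<noteq> j"
  shows "lift_part m i ` (ls ! i) \<inter> lift_part m j ` (ls ! j) = {}"
  using assms lift_part_eq_iff[OF assms(1)] A_tuples_nth(2)[OF assms(2)] by blast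

lemma weight_lift_part_image: "weight m (lift_part m i ` \<pi>) = m * weight m \<pi>"
proof -
  have "weight m (lift_part m i ` \<pi>) = (\<Sum>p\<in>\<pi>. m ^ fst (lift_part m i p))"
    unfolding weight_def by (rule sum.reindex[OF inj_on_subset[OF inj_lift_part], unfolded comp_def]) simp
  then show ?thesis
    by (simp add: weight_def lift_part_def sum_distrib_left)
qed

lemma weight_merge_tuple:
  assumes "0 < m" "ls \<in> A_tuples m"
  shows "weight m (merge_tuple m ls) = m * (\<Sum>l\<leftarrow>ls. weight m l)"
proof -
  have "weight m (merge_tuple m ls) = (\<Sum>i<m. weight m (lift_part m i ` (ls ! i)))"
    unfolding weight_def merge_tuple_def
    using A_tuples_nth(1)[OF assms(2)] merge_tuple_disjoint[OF assms]
    by (intro sum.UNION_disjoint) auto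
  also have "\<dots> = m * (\<Sum>i<m. weight m (ls ! i))"
    by (simp add: weight_lift_part_image sum_distrib_left)
  finally show ?thesis
    using assms(2) by (simp add: A_tuples_def sum_list_sum_nth atLeast0LessThan)
qed

lemma len_merge_tuple:
  assumes "0 < m" "ls \<in> A_tuples m"
  shows "len (merge_tuple m ls) = (\<Sum>l\<leftarrow>ls. len l)"
proof -
  have "len (merge_tuple m ls) = (\<Sum>i<m. card (lift_part m i ` (ls ! i)))"
    unfolding len_def merge_tuple_def
    using A_tuples_nth(1)[OF assms(2)] merge_tuple_disjoint[OF assms]
    by (intro card_UN_disjoint) auto
  also have "\<dots> = (\<Sum>i<m. len (ls ! i))"
    by (simp add: len_def card_image inj_on_subset[OF inj_lift_part])
  finally show ?thesis
    using assms(2) by (simp add: A_tuples_def sum_list_sum_nth atLeast0LessThan)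
qed

unbundle fps_syntax

definition fps_dilate :: "nat \<Rightarrow> 'a::comm_semiring_1 fps \<Rightarrow> 'a fps" where
  "fps_dilate m f = Abs_fps (\<lambda>j. if m dvd j then f $ (j div m) else 0)"

lemma fps_dilate_nth: "fps_dilate m f $ j = (if m dvd j then f $ (j div m) else 0)"
  by (simp add: fps_dilate_def)

lemma fps_dilate_mult:
  assumes "0 < m"
  shows "fps_dilate m (f * g) = fps_dilate m f * fps_dilate m g"
proof (rule fps_ext [symmetric])
  fix j
  have dvd_j: "m dvd j" if "i \<le> j" "m dvd i" "m dvd j - i" for i
    using that dvd_add[of m i "j - i"] by simp
  have "(fps_dilate m f * fps_dilate m g) $ j =
      (\<Sum>i\<in>{0..j}. if m dvd i \<and> m dvd j then f $ (i div m) * g $ ((j - i) div m) else 0)"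
    unfolding fps_mult_nth fps_dilate_nth
    using dvd_j by (intro sum.cong) (auto simp: dvd_diff_nat)
  also have "\<dots> = fps_dilate m (f * g) $ j"
  proof (cases "m dvd j")
    case True
    then obtain n where j: "j = m * n" ..
    have "(\<Sum>i\<in>{0..j}. if m dvd i then f $ (i div m) * g $ ((j - i) div m) else 0) =
        (\<Sum>i\<in>(\<lambda>t. m * t) ` {0..n}. f $ (i div m) * g $ ((j - i) div m))"
      using assms j by (intro sum.mono_neutral_cong_right) (auto elim!: dvdE)
    also have "\<dots> = (\<Sum>t\<in>{0..n}. f $ t * g $ (n - t))"
      using assms j by (simp add: sum.reindex inj_on_def diff_mult_distrib2[symmetric])
    finally show ?thesis
      using True j assms by (simp add: fps_dilate_nth fps_mult_nth)
  qed (simp add: fps_dilate_nth)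
  finally show "(fps_dilate m f * fps_dilate m g) $ j = fps_dilate m (f * g) $ j" .
qed

lemma fps_dilate_add: "fps_dilate m (f + g) = fps_dilate m f + fps_dilate m g"
  by (rule fps_ext) (simp add: fps_dilate_nth)

lemma fps_dilate_one: "0 < m \<Longrightarrow> fps_dilate m 1 = 1"
  by (rule fps_ext) (auto simp: fps_dilate_nth elim: dvdE)

lemma fps_dilate_X_power: "0 < m \<Longrightarrow> fps_dilate m (fps_X ^ k) = fps_X ^ (m * k)"
  by (rule fps_ext) (auto simp: fps_dilate_nth fps_X_power_nth)

lemma fps_dilate_power: "0 < m \<Longrightarrow> fps_dilate m (f ^ k) = fps_dilate m f ^ k"
  by (induction k) (simp_all add: fps_dilate_one fps_dilate_mult)

lemma fps_dilate_prod: "0 < m \<Longrightarrow> fps_dilate m (\<Prod>k\<in>S. f k) = (\<Prod>k\<in>S. fps_dilate m (f k))"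
  by (induction S rule: infinite_finite_induct) (simp_all add: fps_dilate_one fps_dilate_mult)

lemma fps_one_plus_X_mult_dilate_nth:
  assumes "2 \<le> m"
  shows "((1 + fps_X) * fps_dilate m f) $ (m * n) = f $ n"
proof -
  have "\<not> m dvd m * n - 1" if "0 < n"
    using that assms dvd_diff_nat[of m "m * n" "m * n - 1"] by auto
  then show ?thesis
    using assms by (cases n) (auto simp: distrib_right fps_dilate_nth fps_X_mult_nth)
qed

lemma one_plus_power_eq: "\<exists>h. (1 + x) ^ e = 1 + x * (h :: 'a::comm_semiring_1)"
proof (induction e)
  case (Suc e)
  then obtain h where "(1 + x) ^ e = 1 + x * h" ..
  then have "(1 + x) ^ Suc e = 1 + x * (1 + h + x * h)"
    by (simp add: algebra_simps)
  then show ?case ..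
qed (auto intro: exI[of _ 0])

lemma fps_mult_one_plus_X_power_power_nth:
  fixes f :: "'a::comm_semiring_1 fps"
  assumes "n < M"
  shows "(f * (1 + fps_X ^ M) ^ e) $ n = f $ n"
proof -
  obtain h where "(1 + fps_X ^ M) ^ e = (1 + fps_X ^ M * h :: 'a fps)"
    using one_plus_power_eq by blast
  then show ?thesis
    using assms by (simp add: distrib_left mult.left_commute[of f] fps_X_power_mult_nth)
qed

lemma fps_power_nth_cong:
  assumes "\<forall>i\<le>n. f $ i = g $ i"
  shows "(f ^ k) $ n = (g ^ k) $ n"
proof -
  have "(f ^ k) $ j = (g ^ k) $ j" if "j \<le> n" for j
    using that
  proof (induction k arbitrary: j)
    case (Suc k)
    then show ?case
      using assms by (auto simp: fps_mult_nth intro!: sum.cong)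
  qed simp
  then show ?thesis
    by simp
qed

definition gf_prod :: "nat \<Rightarrow> nat \<Rightarrow> nat fps" where
  "gf_prod m N = (\<Prod>k\<le>N. (1 + fps_X ^ (m ^ k)) ^ (m ^ k))"

lemma gf_prod_Suc:
  assumes "0 < m"
  shows "gf_prod m (Suc N) = (1 + fps_X) * fps_dilate m (gf_prod m N ^ m)"
proof -
  have factor: "(1 + fps_X ^ (m ^ Suc k) :: nat fps) ^ (m ^ Suc k) =
      fps_dilate m ((1 + fps_X ^ (m ^ k)) ^ (m ^ k)) ^ m" for k
  proof -
    have "fps_dilate m (1 + fps_X ^ (m ^ k)) = (1 + fps_X ^ (m ^ Suc k) :: nat fps)"
      using assms by (simp add: fps_dilate_add fps_dilate_one fps_dilate_X_power)
    then show ?thesis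
      unfolding fps_dilate_power[OF assms] power_mult[symmetric] by (simp add: mult.commute)
  qed
  have "gf_prod m (Suc N) = (1 + fps_X) * (\<Prod>k\<le>N. (1 + fps_X ^ (m ^ Suc k)) ^ (m ^ Suc k))"
    unfolding gf_prod_def by (simp only: prod.atMost_Suc_shift) simp
  also have "\<dots> = (1 + fps_X) * (\<Prod>k\<le>N. fps_dilate m ((1 + fps_X ^ (m ^ k)) ^ (m ^ k))) ^ m"
    by (simp only: factor prod_power_distrib)
  also have "\<dots> = (1 + fps_X) * fps_dilate m (gf_prod m N ^ m)"
    unfolding gf_prod_def fps_dilate_power[OF assms] fps_dilate_prod[OF assms] ..
  finally show ?thesis .
qed

lemma gf_prod_nth_stable:
  assumes "2 \<le> m" "n \<le> N"
  shows "gf_prod m N $ n = a m n"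
  using assms(2)
proof (induction N rule: dec_induct)
  case base
  show ?case
    by (simp add: gf_prod_def a_def)
next
  case (step N)
  have "n < 2 ^ Suc N"
    using step(1) less_exp[of "Suc N"] by linarith
  also have "\<dots> \<le> m ^ Suc N"
    by (rule power_mono) (use assms(1) in simp_all)
  finally have "gf_prod m (Suc N) $ n = gf_prod m N $ n"
    by (simp add: gf_prod_def fps_mult_one_plus_X_power_power_nth)
  with step show ?case
    by simp
qed

lemma m_convolutive_a:
  assumes "2 \<le> m"
  shows "m_convolutive m (a m)"
  unfolding m_convolutive_def
proof (rule fps_ext)
  fix n
  have "a m (m * n) = gf_prod m (Suc (m * n)) $ (m * n)"
    using gf_prod_nth_stable[OF assms] by simp
  also have "\<dots> = (gf_prod m (m * n) ^ m) $ n"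
    using assms by (simp add: gf_prod_Suc fps_one_plus_X_mult_dilate_nth)
  also have "\<dots> = (Abs_fps (a m) ^ m) $ n"
  proof (intro fps_power_nth_cong allI impI)
    fix i assume "i \<le> n"
    also have "n \<le> m * n"
      using assms by simp
    finally show "gf_prod m (m * n) $ i = Abs_fps (a m) $ i"
      using gf_prod_nth_stable[OF assms] by simp
  qed
  finally show "Abs_fps (\<lambda>n. a m (m * n)) $ n = (Abs_fps (a m) ^ m) $ n"
    by simp
qed

theorem theorem5p2:
  fixes m :: nat
  assumes "m \<ge> 2"
  shows "(\<exists>f. bij_betw f (A_div m) (A_tuples m) \<and>
            (\<forall>\<pi>\<in>A_div m. weight m \<pi> = m * (\<Sum>l\<leftarrow>f \<pi>. weight m l) \<and>
                           len \<pi> = (\<Sum>l\<leftarrow>f \<pi>. len l)))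
         \<and> m_convolutive m (a m)"
proof (intro conjI exI ballI)
  let ?split = "inv_into (A_tuples m) (merge_tuple m)"
  have bij: "bij_betw (merge_tuple m) (A_tuples m) (A_div m)"
    using bij_betw_merge_tuple[OF assms] .
  then show "bij_betw ?split (A_div m) (A_tuples m)"
    by (rule bij_betw_inv_into)
  fix \<pi> assume "\<pi> \<in> A_div m"
  then have "\<pi> \<in> merge_tuple m ` A_tuples m"
    using bij by (simp add: bij_betw_def)
  then have "?split \<pi> \<in> A_tuples m" "merge_tuple m (?split \<pi>) = \<pi>"
    by (rule inv_into_into, rule f_inv_into_f)
  moreover have "0 < m"
    using assms by simp
  ultimately show "weight m \<pi> = m * (\<Sum>l\<leftarrow>?split \<pi>. weight m l)"
    and "len \<pi> = (\<Sum>l\<leftarrow>?split \<pi>. len l)"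
    using weight_merge_tuple len_merge_tuple by metis+
next
  show "m_convolutive m (a m)"
    using m_convolutive_a[OF assms] .
qed

end
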